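(* Fix $C_1,C_2$ with $C_2\ge C_1>0$, and fix $C_3\in(0,C_{3,crit})$. Then $\mathfrak L(C_1,C_2,C_3,b)$ is strictly increasing in $b$ on $(b_-(C_3),b_+(C_3))$.
   Context: Let real constants $C_1,C_2$ be given with $2C_1+C_2>0$, and let $C_{3,crit}=\frac1{27}(2C_1+C_2)^3$. For $C_3\in(0,C_{3,crit})$, let $\phi_1<\phi_2<\phi_3$ be the roots of $2(\phi-C_1)^2(\phi+\frac{C_2}2)=C_3$; they satisfy $-\frac{C_2}{2}<\phi_1<\frac{C_1-C_2}{3}<\phi_2<C_1<\phi_3$. Let $U(\phi)=-\frac12\phi^2-\frac12C_2\phi-\frac12C_1C_2-\frac{C_3}{2(\phi-C_1)}$. Set $b_-(C_3)=U(\phi_2)$ and $b_+(C_3)=U(\phi_1)$. For $b\in(b_-(C_3),b_+(C_3))$, let $\phi_-<\phi_+$ be the two solutions of $U(\phi)=b$ with $\phi_1<\phi_-<\phi_2<\phi_+<C_1$. Define $$\mathfrak L(C_1,C_2,C_3,b)=2\int_{\phi_-}^{\phi_+}\frac{d\phi}{\sqrt{2(b-U(\phi))}}.$$ This is the period of the periodic orbit of $\frac12\dot\phi^2+U(\phi)=b$, which describes travelling waves of the DGH equation. *)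

theory Defs
  imports "HOL-Analysis.Analysis"
begin

definition C3crit :: "real \<Rightarrow> real \<Rightarrow> real" where
  "C3crit C1 C2 = (2*C1 + C2)^3 / 27"

definition cubicF :: "real \<Rightarrow> real \<Rightarrow> real \<Rightarrow> real" where
  "cubicF C1 C2 \<phi> = 2 * (\<phi> - C1)^2 * (\<phi> + C2/2)"

definition phi1 :: "real \<Rightarrow> real \<Rightarrow> real \<Rightarrow> real" where
  "phi1 C1 C2 C3 = (THE \<phi>. cubicF C1 C2 \<phi> = C3 \<and> \<phi> < (C1 - C2)/3)"

definition phi2 :: "real \<Rightarrow> real \<Rightarrow> real \<Rightarrow> real" where
  "phi2 C1 C2 C3 = (THE \<phi>. cubicF C1 C2 \<phi> = C3 \<and> (C1 - C2)/3 < \<phi> \<and> \<phi> < C1)"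

definition U :: "real \<Rightarrow> real \<Rightarrow> real \<Rightarrow> real \<Rightarrow> real" where
  "U C1 C2 C3 \<phi> = - (1/2) * \<phi>^2 - (1/2) * C2 * \<phi> - (1/2) * C1 * C2 - C3 / (2 * (\<phi> - C1))"

definition bminus :: "real \<Rightarrow> real \<Rightarrow> real \<Rightarrow> real" where
  "bminus C1 C2 C3 = U C1 C2 C3 (phi2 C1 C2 C3)"

definition bplus :: "real \<Rightarrow> real \<Rightarrow> real \<Rightarrow> real" where
  "bplus C1 C2 C3 = U C1 C2 C3 (phi1 C1 C2 C3)"

definition phiminus :: "real \<Rightarrow> real \<Rightarrow> real \<Rightarrow> real \<Rightarrow> real" where
  "phiminus C1 C2 C3 b =
     (THE \<phi>. U C1 C2 C3 \<phi> = b \<and> phi1 C1 C2 C3 < \<phi> \<and> \<phi> < phi2 C1 C2 C3)"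

definition phiplus :: "real \<Rightarrow> real \<Rightarrow> real \<Rightarrow> real \<Rightarrow> real" where
  "phiplus C1 C2 C3 b =
     (THE \<phi>. U C1 C2 C3 \<phi> = b \<and> phi2 C1 C2 C3 < \<phi> \<and> \<phi> < C1)"

text \<open>The period: 2 * integral of 1/sqrt(2(b - U)) over [phi_-, phi_+]
  (an improper integral with integrable endpoint singularities; the
  Henstock-Kurzweil integral covers it).\<close>
definition periodL :: "real \<Rightarrow> real \<Rightarrow> real \<Rightarrow> real \<Rightarrow> real" where
  "periodL C1 C2 C3 b =
     2 * integral {phiminus C1 C2 C3 b .. phiplus C1 C2 C3 b}
           (\<lambda>\<phi>. 1 / sqrt (2 * (b - U C1 C2 C3 \<phi>)))"

end

theory Submission
  imports Defs
begin

text \<open>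
  Split the period at \<open>\<phi>\<^sub>2\<close> into the two monotone branches \<open>\<phi>\<^sub>-(b) < \<phi>\<^sub>2 < \<phi>\<^sub>+(b)\<close> of the
  inverse of \<open>U\<close>, and on each branch substitute \<open>U \<phi> = b\<^sub>- + (b - b\<^sub>-) sin\<^sup>2 \<theta>\<close>. This removes
  the square-root singularities at both turning points and shows that \<open>\<LL>(b) / 2\<close> is the
  integral of \<open>Gsum(b\<^sub>- + (b - b\<^sub>-) sin\<^sup>2 \<theta>)\<close> over \<open>0 \<le> \<theta> \<le> \<pi>/2\<close>, where \<open>Gsum(s) = G(\<phi>\<^sub>-(s)) + G(\<phi>\<^sub>+(s))\<close> and
  \<open>G = \<surd>(2 (U - b\<^sub>-)) / |U'|\<close>. The argument of \<open>Gsum\<close> increases with \<open>b\<close>, so it suffices that \<open>Gsum\<close>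
  is strictly increasing. In the coordinate \<open>y = (C\<^sub>1 - \<phi>) / (C\<^sub>1 + C\<^sub>2/2)\<close> one has
  \<open>G = \<surd>(2 \<nu>(y))\<close> for an explicit rational \<open>\<nu>\<close>, and \<open>Gsum'(s)\<close> is a positive multiple of
  \<open>\<nu>'(y\<^sub>-) - \<nu>'(y\<^sub>+)\<close> with \<open>y\<^sub>+ < y\<^sub>-\<close>. So \<open>Gsum\<close> increases because \<open>\<nu>'' > 0\<close>, which comes down
  to a polynomial that has only positive coefficients after a rational change of variables.
\<close>

lemma has_integral_substitution_improper:
  fixes f g g' :: "real \<Rightarrow> real" and a b A B :: real
  assumes "a < b" and "A \<le> B"
    and deriv: "\<And>x. a < x \<Longrightarrow> x < b \<Longrightarrow> (g has_real_derivative g' x) (at x)"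
    and cont_f: "\<And>x. a < x \<Longrightarrow> x < b \<Longrightarrow> isCont f (g x)"
    and cont_g': "\<And>x. a < x \<Longrightarrow> x < b \<Longrightarrow> isCont g' x"
    and f_nonneg: "\<And>x. a < x \<Longrightarrow> x < b \<Longrightarrow> 0 \<le> f (g x)"
    and g'_nonneg: "\<And>x. a \<le> x \<Longrightarrow> x \<le> b \<Longrightarrow> 0 \<le> g' x"
    and lim_a: "(g \<longlongrightarrow> A) (at_right a)" and lim_b: "(g \<longlongrightarrow> B) (at_left b)"
    and integrable: "set_integrable lborel {a<..<b} (\<lambda>x. f (g x) * g' x)"
  shows "(f has_integral integral {a..b} (\<lambda>x. f (g x) * g' x)) {A..B}"
proof -
  have lims: "((ereal \<circ> g \<circ> real_of_ereal) \<longlongrightarrow> ereal A) (at_right (ereal a))"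
    "((ereal \<circ> g \<circ> real_of_ereal) \<longlongrightarrow> ereal B) (at_left (ereal b))"
    using lim_a lim_b by (simp_all add: ereal_tendsto_simps)
  have "set_integrable lborel (einterval A B) f \<and>
      (LBINT x=A..B. f x) = (LBINT x=a..b. f (g x) * g' x)"
    using interval_integral_substitution_nonneg[of "ereal a" "ereal b" g g' f "ereal A" "ereal B"]
      assms lims by auto
  then have f_int: "set_integrable lborel {A<..<B} f"
    and subst: "(LBINT x=A..B. f x) = (LBINT x=a..b. f (g x) * g' x)" by auto
  have "integral {A<..<B} f = integral {a<..<b} (\<lambda>x. f (g x) * g' x)"
    using subst \<open>a < b\<close> \<open>A \<le> B\<close>
    by (simp add: interval_integral_Ioo set_borel_integral_eq_integral(2)[OF f_int]
        set_borel_integral_eq_integral(2)[OF integrable])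
  then show ?thesis
    using set_borel_integral_eq_integral(1)[OF f_int]
    by (simp add: has_integral_Icc_iff_Ioo integral_open_interval_real has_integral_integral)
qed

lemma set_integrable_bounded_continuous_Ioo:
  fixes h :: "real \<Rightarrow> real"
  assumes "continuous_on {a<..<b} h" and "\<And>x. a < x \<Longrightarrow> x < b \<Longrightarrow> \<bar>h x\<bar> \<le> B"
  shows "set_integrable lborel {a<..<b} h"
  unfolding set_integrable_def
proof (rule integrableI_bounded_set[where A="{a<..<b}" and B=B])
  show "(\<lambda>x. indicator {a<..<b} x *\<^sub>R h x) \<in> borel_measurable lborel"
    using borel_measurable_continuous_on_indicator[of "{a<..<b}" h] assms(1) by simp
  show "AE x in lborel. x \<in> {a<..<b} \<longrightarrow> norm (indicator {a<..<b} x *\<^sub>R h x) \<le> B"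
    using assms(2) by auto
  show "emeasure lborel {a<..<b} < \<infinity>"
    by (cases "a \<le> b") auto
qed auto

lemma integral_strict_mono_on_tail:
  fixes f g :: "real \<Rightarrow> real"
  assumes "f integrable_on {a..b}" "g integrable_on {a..b}" "a \<le> c" "c < b"
    and "\<And>x. a \<le> x \<Longrightarrow> x \<le> b \<Longrightarrow> f x \<le> g x"
    and "continuous_on {c..b} f" "continuous_on {c..b} g"
    and "\<And>x. c < x \<Longrightarrow> x < b \<Longrightarrow> f x < g x"
  shows "integral {a..b} f < integral {a..b} g"
proof -
  have "{a..c} \<subseteq> {a..b}" using assms by auto
  then have "integral {a..c} f \<le> integral {a..c} g"
    using assms(5) integrable_subinterval_real[OF assms(1)] integrable_subinterval_real[OF assms(2)]
    by (intro integral_le) auto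
  moreover have "integral {c..b} f < integral {c..b} g"
    using assms(6-8) \<open>c < b\<close> by (intro integral_less_real) auto
  ultimately show ?thesis
    using Henstock_Kurzweil_Integration.integral_combine[of a c b f]
      Henstock_Kurzweil_Integration.integral_combine[of a c b g] assms(1-4)
    by simp
qed

section \<open>Inverse branches of an increasing potential\<close>

definition sin_sq_path :: "real \<Rightarrow> real \<Rightarrow> real \<Rightarrow> real" where
  "sin_sq_path u v \<theta> = u + (v - u) * (sin \<theta>)^2"

lemma sin_sq_path_deriv:
  "(sin_sq_path u v has_real_derivative (v - u) * (2 * sin \<theta> * cos \<theta>)) (at \<theta>)"
  unfolding sin_sq_path_def by (auto intro!: derivative_eq_intros)

lemma isCont_sin_sq_path: "isCont (sin_sq_path u v) \<theta>"
  unfolding sin_sq_path_def by (intro continuous_intros)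

lemma sin_sq_path_strict_bounds:
  assumes "u < v" "0 < \<theta>" "\<theta> < pi/2"
  shows "u < sin_sq_path u v \<theta>" "sin_sq_path u v \<theta> < v"
proof -
  have "0 < sin \<theta>" "0 < cos \<theta>"
    using assms by (auto intro!: sin_gt_zero cos_gt_zero)
  then have "0 < (sin \<theta>)^2" "0 < (cos \<theta>)^2"
    by simp_all
  then have "0 < (sin \<theta>)^2" "(sin \<theta>)^2 < 1"
    using sin_cos_squared_add[of \<theta>] by linarith+
  then have "0 < (v - u) * (sin \<theta>)^2" "(v - u) * (sin \<theta>)^2 < v - u"
    using \<open>u < v\<close> by simp_all
  then show "u < sin_sq_path u v \<theta>" "sin_sq_path u v \<theta> < v"
    unfolding sin_sq_path_def by linarith+
qed

lemma sin_sq_path_tendsto_at_right: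
  assumes "u < v"
  shows "filterlim (sin_sq_path u v) (at_right u) (at_right 0)"
proof (rule tendsto_imp_filterlim_at_right)
  show "(sin_sq_path u v \<longlongrightarrow> u) (at_right 0)"
    using isCont_sin_sq_path[where \<theta>=0]
    by (simp add: isCont_def filterlim_at_split sin_sq_path_def)
  show "\<forall>\<^sub>F \<theta> in at_right 0. u < sin_sq_path u v \<theta>"
    unfolding eventually_at_right_field
    using assms sin_sq_path_strict_bounds by (intro exI[of _ "pi/2"]) auto
qed

lemma sqrt_sin_sq_path:
  assumes "u \<le> v" "0 \<le> sin \<theta>" "0 \<le> cos \<theta>"
  shows "sqrt (2 * (sin_sq_path u v \<theta> - u)) = sqrt (2 * (v - u)) * sin \<theta>"
    and "sqrt (2 * (v - sin_sq_path u v \<theta>)) = sqrt (2 * (v - u)) * cos \<theta>"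
proof -
  have "2 * (sin_sq_path u v \<theta> - u) = 2 * (v - u) * (sin \<theta>)^2"
    and "2 * (v - sin_sq_path u v \<theta>) = 2 * (v - u) * (cos \<theta>)^2"
    by (simp_all add: sin_sq_path_def cos_squared_eq algebra_simps)
  then show "sqrt (2 * (sin_sq_path u v \<theta> - u)) = sqrt (2 * (v - u)) * sin \<theta>"
    and "sqrt (2 * (v - sin_sq_path u v \<theta>)) = sqrt (2 * (v - u)) * cos \<theta>"
    using assms by (simp_all add: real_sqrt_mult)
qed

lemma sin_sq_path_bounds:
  assumes "u < v" "0 < \<theta>" "\<theta> \<le> pi/2"
  shows "u < sin_sq_path u v \<theta>" "sin_sq_path u v \<theta> \<le> v"
  using sin_sq_path_strict_bounds[OF assms(1,2)] assms
  by (cases "\<theta> = pi/2"; force simp: sin_sq_path_def)+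

lemma sin_sq_path_strict_mono:
  assumes "sin \<theta> \<noteq> 0" "v < w"
  shows "sin_sq_path u v \<theta> < sin_sq_path u w \<theta>"
  using assms by (simp add: sin_sq_path_def)

locale increasing_branch =
  fixes V V' \<psi> :: "real \<Rightarrow> real" and l r :: real
  assumes l_less_r: "l < r"
    and isCont_V: "\<And>x. l \<le> x \<Longrightarrow> x \<le> r \<Longrightarrow> isCont V x"
    and V_deriv: "\<And>x. l < x \<Longrightarrow> x < r \<Longrightarrow> (V has_real_derivative V' x) (at x)"
    and V'_pos: "\<And>x. l < x \<Longrightarrow> x < r \<Longrightarrow> 0 < V' x"
    and isCont_V': "\<And>x. l < x \<Longrightarrow> x < r \<Longrightarrow> isCont V' x"
    and inverse: "\<And>s. V l < s \<Longrightarrow> s < V r \<Longrightarrow> l < \<psi> s \<and> \<psi> s < r \<and> V (\<psi> s) = s"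
begin

lemma V_less:
  assumes "l \<le> x" "x < y" "y \<le> r"
  shows "V x < V y"
proof (rule DERIV_pos_imp_increasing_open[OF \<open>x < y\<close>])
  show "\<exists>d. (V has_real_derivative d) (at z) \<and> 0 < d" if "x < z" "z < y" for z
    using that assms V_deriv V'_pos by (intro exI[of _ "V' z"]) auto
  show "continuous_on {x..y} V"
    using assms by (intro continuous_at_imp_continuous_on ballI isCont_V) auto
qed

lemma inverse_V: "l < x \<Longrightarrow> x < r \<Longrightarrow> \<psi> (V x) = x"
  using inverse[of "V x"] V_less[of l x] V_less[of x r] V_less[of x "\<psi> (V x)"] V_less[of "\<psi> (V x)" x]
  by (cases x "\<psi> (V x)" rule: linorder_cases) auto

lemma isCont_inverse:
  assumes "V l < s" "s < V r"
  shows "isCont \<psi> s"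
proof -
  have lo: "l < \<psi> s" "\<psi> s < r" and hi: "V (\<psi> s) = s" using inverse assms by auto
  have "isCont \<psi> (V (\<psi> s))"
    by (rule isCont_inverse_function2[where a="(l + \<psi> s)/2" and b="(\<psi> s + r)/2"])
      (use lo hi in \<open>auto intro!: inverse_V isCont_V\<close>)
  then show ?thesis using lo hi by simp
qed

lemma inverse_deriv:
  assumes "V l < s" "s < V r"
  shows "(\<psi> has_real_derivative inverse (V' (\<psi> s))) (at s)"
proof (rule DERIV_inverse_function[where a="V l" and b="V r"])
  have "l < \<psi> s" "\<psi> s < r" using inverse assms by auto
  then show "(V has_real_derivative V' (\<psi> s)) (at (\<psi> s))" "V' (\<psi> s) \<noteq> 0"
    using V_deriv V'_pos by (auto simp: less_imp_neq[symmetric])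
  show "V (\<psi> y) = y" if "V l < y" "y < V r" for y
    using inverse that by blast
qed (use assms isCont_inverse in auto)

lemma inverse_tendsto: "(\<psi> \<longlongrightarrow> l) (at_right (V l))"
proof (rule order_tendstoI)
  have "V l < V r" using V_less l_less_r by simp
  then have below_r: "\<forall>\<^sub>F s in at_right (V l). s < V r"
    unfolding eventually_at_right_field by (intro exI[of _ "V r"]) auto
  show "\<forall>\<^sub>F s in at_right (V l). a < \<psi> s" if "a < l" for a
    using eventually_at_right_less below_r
    by eventually_elim (use inverse that in force)
  show "\<forall>\<^sub>F s in at_right (V l). \<psi> s < a" if "l < a" for a
  proof -
    define v where "v = min a r"
    have v: "l < v" "v \<le> r" "v \<le> a" using that l_less_r by (auto simp: v_def)
    have "V l < V v" using V_less v by simp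
    then have "\<forall>\<^sub>F s in at_right (V l). s < V v"
      unfolding eventually_at_right_field by (intro exI[of _ "V v"]) auto
    with eventually_at_right_less below_r show ?thesis
    proof eventually_elim
      case (elim s)
      then have "l < \<psi> s" "\<psi> s < r" "V (\<psi> s) = s" using inverse by auto
      have "\<psi> s < v"
      proof (rule ccontr)
        assume "\<not> \<psi> s < v"
        then have "V v \<le> V (\<psi> s)"
          using V_less[of v "\<psi> s"] v \<open>\<psi> s < r\<close> by (cases "v = \<psi> s") auto
        then show False using elim \<open>V (\<psi> s) = s\<close> by simp
      qed
      then show ?case using v by simp
    qed
  qed
qed

definition orbit :: "real \<Rightarrow> real \<Rightarrow> real" where
  "orbit b \<theta> = \<psi> (sin_sq_path (V l) b \<theta>)"

definition orbit' :: "real \<Rightarrow> real \<Rightarrow> real" where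
  "orbit' b \<theta> = inverse (V' (orbit b \<theta>)) * ((b - V l) * (2 * sin \<theta> * cos \<theta>))"

context
  fixes b :: real
  assumes b: "V l < b" "b < V r"
begin

lemma sin_sq_path_range:
  "0 < \<theta> \<Longrightarrow> \<theta> < pi/2 \<Longrightarrow> V l < sin_sq_path (V l) b \<theta> \<and> sin_sq_path (V l) b \<theta> < b"
  using sin_sq_path_strict_bounds b by auto

lemma orbit_range:
  assumes "0 < \<theta>" "\<theta> < pi/2"
  shows "l < orbit b \<theta>" "orbit b \<theta> < r" "V (orbit b \<theta>) = sin_sq_path (V l) b \<theta>"
  using inverse[of "sin_sq_path (V l) b \<theta>"] sin_sq_path_range[OF assms] b
  by (auto simp: orbit_def)

lemma isCont_orbit:
  assumes "0 < \<theta>" "\<theta> \<le> pi/2"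
  shows "isCont (orbit b) \<theta>"
proof -
  have "V l < sin_sq_path (V l) b \<theta>" "sin_sq_path (V l) b \<theta> < V r"
    using sin_sq_path_bounds[of "V l" b \<theta>] assms b by auto
  then show ?thesis
    unfolding orbit_def[abs_def] by (intro isCont_o2[OF isCont_sin_sq_path] isCont_inverse)
qed

lemma orbit_deriv:
  assumes "0 < \<theta>" "\<theta> < pi/2"
  shows "(orbit b has_real_derivative orbit' b \<theta>) (at \<theta>)"
  unfolding orbit'_def orbit_def[abs_def]
  by (rule DERIV_chain2[OF inverse_deriv sin_sq_path_deriv]) (use sin_sq_path_range[OF assms] b in auto)

lemma isCont_orbit':
  assumes "0 < \<theta>" "\<theta> < pi/2"
  shows "isCont (orbit' b) \<theta>"
proof -
  have "isCont (\<lambda>\<theta>. V' (orbit b \<theta>)) \<theta>"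
    using isCont_o2[OF isCont_orbit isCont_V'] orbit_range[OF assms] assms by simp
  moreover have "V' (orbit b \<theta>) \<noteq> 0" using V'_pos[of "orbit b \<theta>"] orbit_range[OF assms] by simp
  ultimately show ?thesis
    unfolding orbit'_def[abs_def] by (intro continuous_intros)
qed

lemma orbit'_nonneg:
  assumes "0 \<le> \<theta>" "\<theta> \<le> pi/2"
  shows "0 \<le> orbit' b \<theta>"
proof (cases "\<theta> = 0 \<or> \<theta> = pi/2")
  case True
  then show ?thesis by (elim disjE; hypsubst; simp add: orbit'_def)
next
  case False
  then have "0 < \<theta>" "\<theta> < pi/2" using assms by auto
  then show ?thesis
    using V'_pos orbit_range b by (simp add: orbit'_def less_imp_le sin_gt_zero cos_gt_zero)
qed

lemma orbit_tendsto_left: "(orbit b \<longlongrightarrow> l) (at_right 0)"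
  unfolding orbit_def[abs_def]
  by (rule filterlim_compose[OF inverse_tendsto sin_sq_path_tendsto_at_right]) (use b in simp)

lemma orbit_tendsto_right: "(orbit b \<longlongrightarrow> \<psi> b) (at_left (pi/2))"
proof -
  have "(orbit b \<longlongrightarrow> orbit b (pi/2)) (at_left (pi/2))"
    using isCont_orbit[of "pi/2"] by (simp add: isCont_def filterlim_at_split)
  then show ?thesis by (simp add: orbit_def sin_sq_path_def)
qed

text \<open>The substitution \<open>V \<phi> = V l + (b - V l) sin\<^sup>2 \<theta>\<close> removes both endpoint singularities:
  with \<open>S = \<surd>(2 (b - V l))\<close>, \<open>\<surd>(2 (b - V \<phi>))\<close> becomes \<open>S cos \<theta>\<close> and \<open>\<surd>(2 (V \<phi> - V l))\<close>
  becomes \<open>S sin \<theta>\<close>.\<close>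
lemma orbit_substitution_integrand:
  assumes \<theta>: "0 < \<theta>" "\<theta> < pi/2"
    and G: "G (orbit b \<theta>) * V' (orbit b \<theta>) = sqrt (2 * (sin_sq_path (V l) b \<theta> - V l))"
  shows "1 / sqrt (2 * (b - V (orbit b \<theta>))) * orbit' b \<theta> = G (orbit b \<theta>)"
proof -
  define S where "S = sqrt (2 * (b - V l))"
  have S: "0 < S" "S * S = 2 * (b - V l)" using b by (simp_all add: S_def)
  have sc: "0 < sin \<theta>" "0 < cos \<theta>" using \<theta> by (auto intro!: sin_gt_zero cos_gt_zero)
  have V': "0 < V' (orbit b \<theta>)" using V'_pos orbit_range[OF \<theta>] by simp
  have cos: "sqrt (2 * (b - V (orbit b \<theta>))) = S * cos \<theta>"
    using orbit_range[OF \<theta>] sqrt_sin_sq_path(2)[of "V l" b \<theta>] b sc by (simp add: S_def)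
  have orbit': "orbit' b \<theta> = S * S * sin \<theta> * cos \<theta> / V' (orbit b \<theta>)"
    by (simp add: orbit'_def S(2) divide_inverse)
  have sin: "G (orbit b \<theta>) = S * sin \<theta> / V' (orbit b \<theta>)"
    using G sqrt_sin_sq_path(1)[of "V l" b \<theta>] b sc V' by (simp add: S_def field_simps)
  show ?thesis unfolding cos orbit' sin using S(1) sc V' by (simp add: field_simps)
qed

lemma inverse_integral_substitution:
  fixes G :: "real \<Rightarrow> real" and B :: real
  assumes isCont_G: "\<And>s. V l < s \<Longrightarrow> s \<le> b \<Longrightarrow> isCont G (\<psi> s)"
    and G_V': "\<And>s. V l < s \<Longrightarrow> s \<le> b \<Longrightarrow> G (\<psi> s) * V' (\<psi> s) = sqrt (2 * (s - V l))"
    and G_bound: "\<And>s. V l < s \<Longrightarrow> s \<le> b \<Longrightarrow> G (\<psi> s) \<le> B"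
  shows "(\<lambda>\<theta>. G (orbit b \<theta>)) integrable_on {0..pi/2}"
    and "((\<lambda>\<phi>. 1 / sqrt (2 * (b - V \<phi>))) has_integral integral {0..pi/2} (\<lambda>\<theta>. G (orbit b \<theta>)))
      {l..\<psi> b}"
proof -
  define f where "f \<phi> = 1 / sqrt (2 * (b - V \<phi>))" for \<phi>
  have G_orbit: "isCont G (orbit b \<theta>)" "0 \<le> G (orbit b \<theta>)" "G (orbit b \<theta>) \<le> B"
    "G (orbit b \<theta>) * V' (orbit b \<theta>) = sqrt (2 * (sin_sq_path (V l) b \<theta> - V l))"
    if "0 < \<theta>" "\<theta> < pi/2" for \<theta>
  proof -
    have s: "V l < sin_sq_path (V l) b \<theta>" "sin_sq_path (V l) b \<theta> \<le> b"
      using sin_sq_path_range[OF that] by auto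
    show "isCont G (orbit b \<theta>)" "G (orbit b \<theta>) \<le> B"
      "G (orbit b \<theta>) * V' (orbit b \<theta>) = sqrt (2 * (sin_sq_path (V l) b \<theta> - V l))"
      using isCont_G[OF s] G_bound[OF s] G_V'[OF s] by (simp_all add: orbit_def)
    then have "0 \<le> G (orbit b \<theta>) * V' (orbit b \<theta>)" using s by simp
    moreover have "0 < V' (orbit b \<theta>)" using V'_pos orbit_range[OF that] by simp
    ultimately show "0 \<le> G (orbit b \<theta>)" by (simp add: zero_le_mult_iff)
  qed
  have integrand: "f (orbit b \<theta>) * orbit' b \<theta> = G (orbit b \<theta>)" if "0 < \<theta>" "\<theta> < pi/2" for \<theta>
    unfolding f_def using orbit_substitution_integrand that G_orbit(4)[OF that] .
  have "continuous_on {0<..<pi/2} (\<lambda>\<theta>. G (orbit b \<theta>))"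
  proof (intro continuous_at_imp_continuous_on ballI)
    fix \<theta> :: real assume "\<theta> \<in> {0<..<pi/2}"
    then show "isCont (\<lambda>\<theta>. G (orbit b \<theta>)) \<theta>"
      using isCont_o2[OF isCont_orbit G_orbit(1)] by auto
  qed
  then have "set_integrable lborel {0<..<pi/2} (\<lambda>\<theta>. G (orbit b \<theta>))"
    using G_orbit(2,3) by (intro set_integrable_bounded_continuous_Ioo[where B=B]) auto
  then show int: "(\<lambda>\<theta>. G (orbit b \<theta>)) integrable_on {0..pi/2}"
    using set_borel_integral_eq_integral(1) integrable_on_Icc_iff_Ioo by blast
  have "set_integrable lborel {0<..<pi/2} (\<lambda>\<theta>. f (orbit b \<theta>) * orbit' b \<theta>)"
    using \<open>set_integrable lborel {0<..<pi/2} _\<close>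
    by (rule set_integrable_cong[THEN iffD1, rotated -1]) (auto simp: integrand)
  then have "(f has_integral integral {0..pi/2} (\<lambda>\<theta>. f (orbit b \<theta>) * orbit' b \<theta>)) {l..\<psi> b}"
  proof (rule has_integral_substitution_improper[rotated -1])
    show "isCont f (orbit b \<theta>)" if "0 < \<theta>" "\<theta> < pi/2" for \<theta>
      unfolding f_def[abs_def]
      by (intro continuous_intros isCont_V) (use orbit_range[OF that] sin_sq_path_range[OF that] in auto)
    show "0 \<le> f (orbit b \<theta>)" if "0 < \<theta>" "\<theta> < pi/2" for \<theta>
      using orbit_range[OF that] sin_sq_path_range[OF that] by (simp add: f_def)
    show "l \<le> \<psi> b" using inverse b by (simp add: less_imp_le)
  qed (auto intro: orbit_deriv isCont_orbit' orbit'_nonneg orbit_tendsto_left orbit_tendsto_right)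
  moreover have "integral {0..pi/2} (\<lambda>\<theta>. f (orbit b \<theta>) * orbit' b \<theta>) = integral {0..pi/2} (\<lambda>\<theta>. G (orbit b \<theta>))"
    by (simp only: integral_open_interval_real)
      (rule integral_cong, simp add: integrand)
  ultimately show "((\<lambda>\<phi>. 1 / sqrt (2 * (b - V \<phi>))) has_integral integral {0..pi/2} (\<lambda>\<theta>. G (orbit b \<theta>)))
      {l..\<psi> b}"
    unfolding f_def[abs_def] by simp
qed

end

end

section \<open>The normalised cubic and the function \<open>\<nu>\<close>\<close>

definition hcubic :: "real \<Rightarrow> real" where
  "hcubic y = y^2 * (1 - y)"

lemma hcubic_diff: "hcubic y - hcubic z = (y - z) * (y + z - y^2 - y*z - z^2)"
  unfolding hcubic_def by (simp add: algebra_simps power2_eq_square)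

lemma hcubic_inj_above:
  assumes "2/3 < y" "2/3 < z" "hcubic y = hcubic z"
  shows "y = z"
proof (rule ccontr)
  assume "y \<noteq> z"
  then have "y + z - y^2 - y*z - z^2 = 0" using hcubic_diff[of y z] assms(3) by simp
  moreover have "y * (y + z/2 - 1) + z * (z + y/2 - 1) > 0"
    using assms(1,2) by (intro add_pos_pos mult_pos_pos) auto
  ultimately show False by (simp add: algebra_simps power2_eq_square)
qed

lemma hcubic_inj_below:
  assumes "0 < y" "y < 2/3" "0 < z" "z < 2/3" "hcubic y = hcubic z"
  shows "y = z"
proof (rule ccontr)
  assume "y \<noteq> z"
  then have "y + z - y^2 - y*z - z^2 = 0" using hcubic_diff[of y z] assms(5) by simp
  moreover have "y * (1 - y - z/2) + z * (1 - z - y/2) > 0"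
    using assms(1-4) by (intro add_pos_pos mult_pos_pos) auto
  ultimately show False by (simp add: algebra_simps power2_eq_square)
qed

lemma hcubic_two_thirds: "hcubic (2/3) = 4/27"
  by (simp add: hcubic_def power2_eq_square)

lemma hcubic_root_above:
  assumes "0 < c" "c < 4/27"
  obtains q where "2/3 < q" "q < 1" "hcubic q = c"
proof -
  have "\<exists>x\<ge>2/3. x \<le> 1 \<and> hcubic x = c"
    by (rule IVT2) (use assms in \<open>auto simp: hcubic_def power2_eq_square\<close>)
  then obtain x where "2/3 \<le> x" "x \<le> 1" "hcubic x = c" by blast
  moreover have "x \<noteq> 2/3"
    using assms(2) \<open>hcubic x = c\<close> hcubic_two_thirds by (metis less_irrefl)
  moreover have "x \<noteq> 1" using assms \<open>hcubic x = c\<close> by (auto simp: hcubic_def)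
  ultimately show ?thesis by (auto intro!: that)
qed

lemma hcubic_root_below:
  assumes "0 < c" "c < 4/27"
  obtains p where "0 < p" "p < 2/3" "hcubic p = c"
proof -
  have "\<exists>x\<ge>0. x \<le> 2/3 \<and> hcubic x = c"
    by (rule IVT) (use assms in \<open>auto simp: hcubic_def power2_eq_square\<close>)
  then obtain x where "0 \<le> x" "x \<le> 2/3" "hcubic x = c" by blast
  moreover have "x \<noteq> 2/3"
    using assms(2) \<open>hcubic x = c\<close> hcubic_two_thirds by (metis less_irrefl)
  moreover have "x \<noteq> 0" using assms \<open>hcubic x = c\<close> by (auto simp: hcubic_def)
  ultimately show ?thesis by (auto intro!: that)
qed

definition quad :: "real \<Rightarrow> real \<Rightarrow> real" where
  "quad p y = p + y - p^2 - p*y - y^2"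

lemma hcubic_diff_quad: "hcubic y - hcubic p = (y - p) * quad p y"
  unfolding hcubic_diff quad_def by (simp add: algebra_simps)

lemma quad_factor:
  assumes "quad p q = 0"
  shows "quad p y = (q - y) * (y - (1 - p - q))"
proof -
  have "quad p y - (q - y) * (y - (1 - p - q)) = quad p q"
    by (simp add: quad_def algebra_simps power2_eq_square)
  then show ?thesis using assms by simp
qed

lemma quad_root_sum:
  assumes "0 < p" "p < q" "quad p q = 0"
  shows "1 < p + q"
proof -
  have "(p + q) * (p + q - 1) - p * q = - quad p q"
    by (simp add: quad_def algebra_simps power2_eq_square)
  then have "(p + q) * (p + q - 1) = p * q" using assms(3) by simp
  then have "0 < (p + q) * (p + q - 1)" using assms by simp
  then show ?thesis using assms by (simp add: zero_less_mult_iff)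
qed

lemma quad_pos:
  assumes "0 < p" "p < q" "quad p q = 0" "0 \<le> y" "y < q"
  shows "0 < quad p y"
  unfolding quad_factor[OF assms(3)]
  using quad_root_sum[OF assms(1-3)] assms by (intro mult_pos_pos) auto

definition nu :: "real \<Rightarrow> real \<Rightarrow> real" where
  "nu p y = y^3 * (2 - 2*p - y) / (2 * (quad p y)^2)"

definition nu' :: "real \<Rightarrow> real \<Rightarrow> real" where
  "nu' p y = ((6*(1 - p)*y^2 - 4*y^3) * quad p y - 2 * y^3 * (2 - 2*p - y) * (1 - p - 2*y))
     / (2 * (quad p y)^3)"

definition kpoly :: "real \<Rightarrow> real \<Rightarrow> real" where
  "kpoly p y = 2*p^2*(1 - p)^2 - 2*y*p^2*(1 - p) + 4*y^2*p*(1 - p) + y^3*(1 - 3*p)"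

lemma quad_deriv: "(quad p has_real_derivative 1 - p - 2*y) (at y)"
  unfolding quad_def by (auto intro!: derivative_eq_intros)

lemma nu_deriv:
  assumes "quad p y \<noteq> 0"
  shows "(nu p has_real_derivative nu' p y) (at y)"
proof -
  have num: "((\<lambda>y. y^3 * (2 - 2*p - y)) has_real_derivative 6*(1 - p)*y^2 - 4*y^3) (at y)"
    by (auto intro!: derivative_eq_intros simp: algebra_simps power2_eq_square power3_eq_cube)
  have den: "((\<lambda>y. 2 * (quad p y)^2) has_real_derivative 4 * quad p y * (1 - p - 2*y)) (at y)"
    by (auto intro!: derivative_eq_intros quad_deriv)
  have "(nu p has_real_derivative
      ((6*(1 - p)*y^2 - 4*y^3) * (2 * (quad p y)^2) - y^3 * (2 - 2*p - y) * (4 * quad p y * (1 - p - 2*y)))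
      / (2 * (quad p y)^2 * (2 * (quad p y)^2))) (at y)" (is "(_ has_real_derivative ?D) _")
    unfolding nu_def[abs_def] by (rule DERIV_divide[OF num den]) (use assms in simp)
  moreover have "?D = nu' p y"
    using assms by (simp add: nu'_def field_simps power2_eq_square power3_eq_cube)
  ultimately show ?thesis by simp
qed

lemma nu'_deriv:
  assumes "quad p y \<noteq> 0"
  shows "(nu' p has_real_derivative 3 * y * (1 - p) * kpoly p y / (quad p y)^4) (at y)"
proof -
  define A' where "A' y = 6*(1 - p)*y^2 - 4*y^3" for y
  define N where "N y = A' y * quad p y - 2 * y^3 * (2 - 2*p - y) * (1 - p - 2*y)" for y
  define N' where "N' = (12*(1 - p)*y - 12*y^2) * quad p y - A' y * (1 - p - 2*y) + 4 * y^3 * (2 - 2*p - y)"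
  have num: "(N has_real_derivative N') (at y)"
    unfolding N_def[abs_def] A'_def N'_def
    by (rule derivative_eq_intros quad_deriv refl)+
      (simp add: algebra_simps power2_eq_square power3_eq_cube)
  have den: "((\<lambda>y. 2 * (quad p y)^3) has_real_derivative 6 * (quad p y)^2 * (1 - p - 2*y)) (at y)"
    by (auto intro!: derivative_eq_intros quad_deriv simp: power2_eq_square)
  have deriv: "(nu' p has_real_derivative
      (N' * (2 * (quad p y)^3) - N y * (6 * (quad p y)^2 * (1 - p - 2*y))) / (2 * (quad p y)^3 * (2 * (quad p y)^3))) (at y)"
    (is "(_ has_real_derivative ?D) _")
    unfolding nu'_def[abs_def] N_def[symmetric, unfolded A'_def]
    by (rule DERIV_divide[OF num den]) (use assms in simp)
  have "?D = (2 * (quad p y)^2 * (N' * quad p y - 3 * N y * (1 - p - 2*y)))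
      / (2 * (quad p y)^2 * (2 * (quad p y)^4))"
    by (simp add: algebra_simps power2_eq_square power3_eq_cube power4_eq_xxxx)
  also have "\<dots> = (N' * quad p y - 3 * N y * (1 - p - 2*y)) / (2 * (quad p y)^4)"
    using assms by (intro mult_divide_mult_cancel_left) simp
  also have "N' * quad p y - 3 * N y * (1 - p - 2*y) = 6 * y * (1 - p) * kpoly p y"
    unfolding N_def N'_def A'_def quad_def kpoly_def
    by (simp add: algebra_simps power2_eq_square power3_eq_cube)
  also have "6 * y * (1 - p) * kpoly p y / (2 * (quad p y)^4) = 3 * y * (1 - p) * kpoly p y / (quad p y)^4"
    by simp
  finally show ?thesis using deriv by simp
qed

text \<open>\<open>D\<^sup>4 (1 + w)\<^sup>3 kpoly p y\<close> after the substitution \<open>m = q/p\<close>, \<open>w = y/(q - y)\<close>,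
  \<open>D = 1 + m + m\<^sup>2\<close> (lemma \<open>kpoly_pos\<close>); at \<open>m = 1 + u\<close> all its coefficients are positive.\<close>
definition kpoly_mw :: "real \<Rightarrow> real \<Rightarrow> real" where
  "kpoly_mw m w = 2*(1 + m)^2*(m^2)^2*(1 + w)^3 - 2*(m*(1 + m)*w)*(1 + m)^2*m^2*(1 + w)^2
     + 4*(m*(1 + m)*w)^2*(1 + m)*m^2*(1 + w) + (m*(1 + m)*w)^3*(m^2 - 2*m - 2)"

lemma kpoly_mw_shift: "kpoly_mw (1 + u) w = 8 + 8*w + 24*w^2 + 40*u + 48*u*w + 152*u*w^2 + 36*u*w^3
  + 82*u^2 + 114*u^2*w + 390*u^2*w^2 + 168*u^2*w^3 + 88*u^3 + 138*u^3*w + 528*u^3*w^2 + 325*u^3*w^3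
  + 52*u^4 + 90*u^4*w + 408*u^4*w^2 + 337*u^4*w^3 + 16*u^5 + 30*u^5*w + 180*u^5*w^2 + 202*u^5*w^3
  + 2*u^6 + 4*u^6*w + 42*u^6*w^2 + 70*u^6*w^3 + 4*u^7*w^2 + 13*u^7*w^3 + u^8*w^3"
  unfolding kpoly_mw_def by (simp add: algebra_simps numeral_eq_Suc)

lemma kpoly_mw_pos: "0 < u \<Longrightarrow> 0 < w \<Longrightarrow> 0 < kpoly_mw (1 + u) w"
  unfolding kpoly_mw_shift
  by (auto intro!: add_pos_nonneg add_nonneg_nonneg mult_nonneg_nonneg zero_le_power simp: less_imp_le)

lemma kpoly_scaled:
  "D^4 * (1 + w)^3 * kpoly p y = 2*(p*D)^2*((1 - p)*D)^2*(1 + w)^3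
     - 2*(y*D*(1 + w))*(p*D)^2*((1 - p)*D)*(1 + w)^2
     + 4*(y*D*(1 + w))^2*(p*D)*((1 - p)*D)*(1 + w) + (y*D*(1 + w))^3*(D*(1 - 3*p))"
  unfolding kpoly_def by (simp add: algebra_simps numeral_eq_Suc)

lemma kpoly_pos:
  assumes "0 < p" "p < q" "quad p q = 0" "0 < y" "y < q"
  shows "0 < kpoly p y"
proof -
  define m where "m = q / p"
  define w where "w = y / (q - y)"
  define D where "D = 1 + m + m^2"
  have q: "q = m * p" and m: "1 < m" using assms by (simp_all add: m_def)
  have w: "0 < w" using assms by (simp add: w_def)
  have "quad p q = p * (1 + m - p * D)"
    unfolding q quad_def D_def by (simp add: algebra_simps power2_eq_square)
  then have pD: "p * D = 1 + m" using assms by simp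
  then have "(1 - p) * D = m^2" "D * (1 - 3*p) = m^2 - 2*m - 2"
    by (simp_all add: D_def algebra_simps power2_eq_square)
  moreover have "y * D * (1 + w) = m * (1 + m) * w"
  proof -
    have "y * (1 + w) = q * w" using assms by (simp add: w_def field_simps)
    then show ?thesis using pD q by (metis mult.assoc mult.commute)
  qed
  ultimately have "D^4 * (1 + w)^3 * kpoly p y = kpoly_mw m w"
    unfolding kpoly_scaled pD kpoly_mw_def by simp
  moreover have "0 < D" using m by (simp add: D_def add_pos_pos)
  then have "0 < D^4 * (1 + w)^3" using w by simp
  moreover have "0 < kpoly_mw m w" using kpoly_mw_pos[of "m - 1" w] m w by simp
  ultimately show ?thesis by (metis zero_less_mult_pos)
qed

lemma quad_root_less_one:
  assumes "0 < p" "p < q" "quad p q = 0"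
  shows "p < 1"
proof -
  have "p * (1 - p) - q * (p + q - 1) = quad p q"
    by (simp add: quad_def algebra_simps power2_eq_square)
  then have "p * (1 - p) = q * (p + q - 1)" using assms(3) by simp
  moreover have "0 < q * (p + q - 1)" using quad_root_sum[OF assms] assms by simp
  ultimately have "0 < p * (1 - p)" by simp
  then show ?thesis using zero_less_mult_pos[of p "1 - p"] assms(1) by simp
qed

lemma nu'_strict_mono:
  assumes "0 < p" "p < q" "quad p q = 0" "0 < y" "y < z" "z < q"
  shows "nu' p y < nu' p z"
proof (rule DERIV_pos_imp_increasing[OF \<open>y < z\<close>])
  fix x assume "y \<le> x" "x \<le> z"
  then have x: "0 < x" "x < q" using assms by auto
  then have Q: "0 < quad p x" using quad_pos assms by simp
  have "0 < 3 * x * (1 - p) * kpoly p x / (quad p x)^4"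
    using kpoly_pos[OF assms(1-3) x] quad_root_less_one[OF assms(1-3)] x Q by simp
  then show "\<exists>d. (nu' p has_real_derivative d) (at x) \<and> 0 < d"
    using nu'_deriv Q by force
qed

lemma exists_quotient_gt:
  fixes p A E :: real
  assumes p: "0 < p" "p < 2/3" and A: "0 < A"
  shows "\<exists>y. 0 < y \<and> y < p \<and> E < A * (y - p)^2 * (2 - y - 2*p) / (2*y)"
proof -
  define X where "X = A * p^2 * (2 - 3*p)"
  define E' where "E' = max 1 E"
  have X: "0 < X" using p A by (simp add: X_def)
  have E': "0 < E'" "E \<le> E'" by (simp_all add: E'_def)
  define y where "y = min (p/2) (X / (16*E'))"
  have y: "0 < y" "y \<le> p/2" using p X E' by (simp_all add: y_def)
  have "y \<le> X / (16*E')" by (simp add: y_def)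
  then have "16 * E' * y \<le> X" using E' by (simp add: field_simps)
  have "(p/2)^2 \<le> (p - y)^2" using y p by (intro power_mono) auto
  then have num: "A * (p^2/4) * (2 - 3*p) \<le> A * (y - p)^2 * (2 - y - 2*p)"
    using y p A by (intro mult_mono) (auto simp: power2_commute power_divide)
  have "E < 2 * E'" using E' by simp
  also have "\<dots> \<le> X / (8*y)" using y \<open>16 * E' * y \<le> X\<close> by (simp add: field_simps)
  also have "\<dots> = A * (p^2/4) * (2 - 3*p) / (2*y)" by (simp add: X_def field_simps)
  also have "\<dots> \<le> A * (y - p)^2 * (2 - y - 2*p) / (2*y)"
    using num y by (intro divide_right_mono) auto
  finally show ?thesis using y p by (intro exI[of _ y]) auto
qed

section \<open>The DGH potential\<close>

locale dgh_wave =
  fixes C1 C2 C3 :: real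
  assumes two_C1_C2_pos: "0 < 2*C1 + C2" and C3_pos: "0 < C3" and C3_less_crit: "C3 < C3crit C1 C2"
begin

definition a :: real where "a = C1 + C2/2"
definition \<kappa> :: real where "\<kappa> = C3 / (2 * a^3)"
definition y_of :: "real \<Rightarrow> real" where "y_of \<phi> = (C1 - \<phi>) / a"

abbreviation "UU \<equiv> U C1 C2 C3"
abbreviation "ph1 \<equiv> phi1 C1 C2 C3"
abbreviation "ph2 \<equiv> phi2 C1 C2 C3"
abbreviation "ph_minus \<equiv> phiminus C1 C2 C3"
abbreviation "ph_plus \<equiv> phiplus C1 C2 C3"
abbreviation "bm \<equiv> bminus C1 C2 C3"
abbreviation "bp \<equiv> bplus C1 C2 C3"

definition p :: real where "p = y_of ph2"
definition q :: real where "q = y_of ph1"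

lemma bminus_eq: "UU ph2 = bm" and bplus_eq: "UU ph1 = bp"
  by (simp_all add: bminus_def bplus_def)

lemma a_pos: "0 < a"
  using two_C1_C2_pos by (simp add: a_def)

lemma \<kappa>_pos: "0 < \<kappa>"
  using a_pos C3_pos by (simp add: \<kappa>_def)

lemma \<kappa>_less: "\<kappa> < 4/27"
proof -
  have "C3crit C1 C2 = 8 * a^3 / 27"
    unfolding C3crit_def a_def by (simp add: power3_eq_cube field_simps)
  then show ?thesis using C3_less_crit a_pos by (simp add: \<kappa>_def field_simps)
qed

lemma cubicF_eq: "cubicF C1 C2 \<phi> = 2 * a^3 * hcubic (y_of \<phi>)"
proof -
  have "cubicF C1 C2 \<phi> = 2 * (C1 - \<phi>)^2 * (a - (C1 - \<phi>))"
    unfolding cubicF_def a_def by (simp add: power2_eq_square algebra_simps)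
  also have "\<dots> = 2 * a^3 * hcubic (y_of \<phi>)"
    using a_pos unfolding hcubic_def y_of_def by (simp add: field_simps power2_eq_square power3_eq_cube)
  finally show ?thesis .
qed

lemma cubicF_eq_C3_iff: "cubicF C1 C2 \<phi> = C3 \<longleftrightarrow> hcubic (y_of \<phi>) = \<kappa>"
  using a_pos by (auto simp: cubicF_eq \<kappa>_def field_simps)

lemma y_of_inverse: "y_of (C1 - a * y) = y"
  using a_pos by (simp add: y_of_def)

lemma y_of_inj: "y_of x = y_of z \<Longrightarrow> x = z"
  using a_pos by (simp add: y_of_def)

lemma y_of_less_iff: "y_of x < y_of z \<longleftrightarrow> z < x"
  using a_pos by (simp add: y_of_def divide_strict_right_mono_neg field_simps)

lemma y_of_pos_iff: "0 < y_of \<phi> \<longleftrightarrow> \<phi> < C1"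
  using a_pos by (simp add: y_of_def field_simps)

lemma y_of_less_two_thirds_iff: "y_of \<phi> < 2/3 \<longleftrightarrow> (C1 - C2)/3 < \<phi>"
  using a_pos by (simp add: y_of_def a_def field_simps; arith)

lemma y_of_greater_two_thirds_iff: "2/3 < y_of \<phi> \<longleftrightarrow> \<phi> < (C1 - C2)/3"
  using a_pos by (simp add: y_of_def a_def field_simps; arith)

lemma phi2_eq:
  assumes "0 < y" "y < 2/3" "hcubic y = \<kappa>"
  shows "ph2 = C1 - a * y"
  unfolding phi2_def
proof (rule the_equality)
  show "cubicF C1 C2 (C1 - a * y) = C3 \<and> (C1 - C2)/3 < C1 - a * y \<and> C1 - a * y < C1"
    using assms y_of_pos_iff[of "C1 - a * y"] y_of_less_two_thirds_iff[of "C1 - a * y"]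
    by (simp add: cubicF_eq_C3_iff y_of_inverse)
  fix \<phi> assume "cubicF C1 C2 \<phi> = C3 \<and> (C1 - C2)/3 < \<phi> \<and> \<phi> < C1"
  then have "hcubic (y_of \<phi>) = \<kappa>" "0 < y_of \<phi>" "y_of \<phi> < 2/3"
    using y_of_pos_iff y_of_less_two_thirds_iff cubicF_eq_C3_iff by auto
  then have "y_of \<phi> = y_of (C1 - a * y)"
    using hcubic_inj_below assms by (simp add: y_of_inverse)
  then show "\<phi> = C1 - a * y" by (rule y_of_inj)
qed

lemma phi1_eq:
  assumes "2/3 < y" "hcubic y = \<kappa>"
  shows "ph1 = C1 - a * y"
  unfolding phi1_def
proof (rule the_equality)
  show "cubicF C1 C2 (C1 - a * y) = C3 \<and> C1 - a * y < (C1 - C2)/3"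
    using assms y_of_greater_two_thirds_iff[of "C1 - a * y"]
    by (simp add: cubicF_eq_C3_iff y_of_inverse)
  fix \<phi> assume "cubicF C1 C2 \<phi> = C3 \<and> \<phi> < (C1 - C2)/3"
  then have "hcubic (y_of \<phi>) = \<kappa>" "2/3 < y_of \<phi>"
    using y_of_greater_two_thirds_iff cubicF_eq_C3_iff by auto
  then have "y_of \<phi> = y_of (C1 - a * y)"
    using hcubic_inj_above assms by (simp add: y_of_inverse)
  then show "\<phi> = C1 - a * y" by (rule y_of_inj)
qed

lemma p_props: "0 < p" "p < 2/3" "hcubic p = \<kappa>"
proof -
  obtain y where "0 < y" "y < 2/3" "hcubic y = \<kappa>"
    using hcubic_root_below[OF \<kappa>_pos \<kappa>_less] by blast
  moreover from phi2_eq[OF this] have "p = y" by (simp add: p_def y_of_inverse)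
  ultimately show "0 < p" "p < 2/3" "hcubic p = \<kappa>" by simp_all
qed

lemma q_props: "2/3 < q" "q < 1" "hcubic q = \<kappa>"
proof -
  obtain y where "2/3 < y" "y < 1" "hcubic y = \<kappa>"
    using hcubic_root_above[OF \<kappa>_pos \<kappa>_less] by blast
  moreover from phi1_eq[OF this(1,3)] have "q = y" by (simp add: q_def y_of_inverse)
  ultimately show "2/3 < q" "q < 1" "hcubic q = \<kappa>" by simp_all
qed

lemma ph1_less_ph2: "ph1 < ph2"
  using p_props q_props y_of_less_iff[of ph2 ph1] by (simp add: p_def q_def)

lemma ph2_less_C1: "ph2 < C1"
  using p_props y_of_pos_iff[of ph2] by (simp add: p_def)

lemma quad_p_q: "quad p q = 0"
proof -
  have "(q - p) * quad p q = 0"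
    using p_props q_props hcubic_diff_quad[of q p] by simp
  then show ?thesis using p_props q_props by simp
qed

lemma q_less: "q < 2 - 2*p"
proof -
  have "quad p (2 - 2*p) = - ((2 - 3*p) * (1 - p))"
    by (simp add: quad_def algebra_simps power2_eq_square)
  then have "quad p (2 - 2*p) < 0" using p_props by simp
  show ?thesis
  proof (rule ccontr)
    assume "\<not> q < 2 - 2*p"
    then have "2 - 2*p < q \<or> 2 - 2*p = q" by auto
    then show False
      using \<open>quad p (2 - 2*p) < 0\<close> quad_pos[of p q "2 - 2*p"] p_props q_props quad_p_q by auto
  qed
qed

lemma \<kappa>_eq: "\<kappa> = p^2 * (1 - p)"
  using p_props by (simp add: hcubic_def)

lemma U_minus_bminus:
  assumes "\<phi> < C1"
  shows "UU \<phi> - bm = a^2 * (y_of \<phi> - p)^2 * (2 - y_of \<phi> - 2*p) / (2 * y_of \<phi>)"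
proof -
  define K where "K = - (C1 * C1) / 2 - C1 * C2"
  have U_y: "UU \<psi> = K + a^2 * (y_of \<psi> - (y_of \<psi>)^2 / 2 + \<kappa> / y_of \<psi>)" if "\<psi> < C1" for \<psi>
  proof -
    define x where "x = C1 - \<psi>"
    have x: "0 < x" and y: "y_of \<psi> = x / a" using that by (simp_all add: x_def y_of_def)
    have "\<psi> - C1 = - x" by (simp add: x_def)
    then have "C3 / (2 * (\<psi> - C1)) = - (C3 / (2 * x))" by simp
    moreover have "- (1/2) * \<psi>^2 - (1/2) * C2 * \<psi> - (1/2) * C1 * C2 = K + a * x - x^2 / 2"
      unfolding K_def a_def x_def by (simp add: field_simps power2_eq_square)
    ultimately have "UU \<psi> = K + a * x - x^2 / 2 + C3 / (2 * x)"
      unfolding U_def by simp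
    moreover have "a^2 * (x/a) = a * x" "a^2 * ((x/a)^2 / 2) = x^2 / 2" "a^2 * (\<kappa> / (x/a)) = C3 / (2 * x)"
      using a_pos x by (simp_all add: \<kappa>_def power2_eq_square power3_eq_cube)
    ultimately show ?thesis unfolding y by (simp add: algebra_simps)
  qed
  have y: "0 < y_of \<phi>" using assms y_of_pos_iff by simp
  have "UU \<phi> - bm = a^2 * ((y_of \<phi> - (y_of \<phi>)^2 / 2 + \<kappa> / y_of \<phi>) - (p - p^2 / 2 + \<kappa> / p))"
    using U_y[OF assms] U_y[OF ph2_less_C1] by (simp add: p_def algebra_simps flip: bminus_eq)
  also have "\<dots> = a^2 * (y_of \<phi> - p)^2 * (2 - y_of \<phi> - 2*p) / (2 * y_of \<phi>)"
    using y p_props(1) unfolding \<kappa>_eq by (simp add: field_simps power2_eq_square; simp add: algebra_simps)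
  finally show ?thesis .
qed

definition dU :: "real \<Rightarrow> real" where
  "dU \<phi> = - \<phi> - C2/2 + C3/2 * (inverse (\<phi> - C1))^2"

lemma U_eq_inverse:
  "UU \<phi> = - (1/2) * \<phi>^2 - (1/2) * C2 * \<phi> - (1/2) * C1 * C2 - C3/2 * inverse (\<phi> - C1)"
  by (cases "\<phi> = C1") (simp_all add: U_def field_simps)

lemma U_deriv:
  assumes "\<phi> \<noteq> C1"
  shows "(UU has_real_derivative dU \<phi>) (at \<phi>)"
  unfolding U_eq_inverse[abs_def] dU_def using assms
  by (auto intro!: derivative_eq_intros simp: power2_eq_square)

lemma dU_eq:
  assumes "\<phi> < C1"
  shows "dU \<phi> = - a * (y_of \<phi> - p) * quad p (y_of \<phi>) / (y_of \<phi>)^2"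
proof -
  define x where "x = C1 - \<phi>"
  define y where "y = y_of \<phi>"
  have x: "0 < x" and y: "0 < y" "y = x / a"
    using assms a_pos by (simp_all add: x_def y_def y_of_def)
  have "- \<phi> - C2/2 = x - a" by (simp add: a_def x_def)
  moreover have "C3/2 * (inverse (\<phi> - C1))^2 = C3 / (2 * x^2)"
    by (simp add: x_def power2_eq_square field_simps)
  ultimately have "dU \<phi> = x - a + C3 / (2 * x^2)"
    unfolding dU_def by simp
  also have "\<dots> = - a * (1 - y) + a * \<kappa> / y^2"
    using a_pos x unfolding y(2) \<kappa>_def by (simp add: field_simps power2_eq_square power3_eq_cube)
  also have "\<dots> = - a * (y - p) * quad p y / y^2"
    using y(1) unfolding \<kappa>_eq quad_def by (simp add: field_simps power2_eq_square; simp add: algebra_simps)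
  finally show ?thesis by (simp add: y_def)
qed

lemma y_of_bounds: "ph1 < \<phi> \<Longrightarrow> \<phi> < C1 \<Longrightarrow> 0 < y_of \<phi> \<and> y_of \<phi> < q"
  using y_of_pos_iff y_of_less_iff by (simp add: q_def)

lemma dU_pos:
  assumes "ph2 < \<phi>" "\<phi> < C1"
  shows "0 < dU \<phi>"
proof -
  have "0 < y_of \<phi>" "y_of \<phi> < p" "y_of \<phi> < q"
    using assms y_of_bounds[of \<phi>] ph1_less_ph2 y_of_less_iff by (auto simp: p_def)
  then have "0 < a * (p - y_of \<phi>) * quad p (y_of \<phi>) / (y_of \<phi>)^2"
    using a_pos quad_pos[OF p_props(1) _ quad_p_q] p_props q_props by simp
  then show ?thesis using dU_eq[OF assms(2)] by (simp add: algebra_simps)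
qed

lemma dU_neg:
  assumes "ph1 < \<phi>" "\<phi> < ph2"
  shows "dU \<phi> < 0"
proof -
  have "\<phi> < C1" using assms ph2_less_C1 by simp
  have "0 < y_of \<phi>" "p < y_of \<phi>" "y_of \<phi> < q"
    using assms y_of_bounds[OF assms(1) \<open>\<phi> < C1\<close>] y_of_less_iff by (auto simp: p_def)
  then have "0 < a * (y_of \<phi> - p) * quad p (y_of \<phi>) / (y_of \<phi>)^2"
    using a_pos quad_pos[OF p_props(1) _ quad_p_q] p_props q_props by simp
  then show ?thesis using dU_eq[OF \<open>\<phi> < C1\<close>] by simp
qed

lemma isCont_U: "\<phi> \<noteq> C1 \<Longrightarrow> isCont UU \<phi>"
  using U_deriv DERIV_isCont by blast

lemma isCont_dU: "\<phi> \<noteq> C1 \<Longrightarrow> isCont dU \<phi>"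
  unfolding dU_def by (intro continuous_intros) auto

lemma U_less:
  assumes "ph2 \<le> x" "x < z" "z < C1"
  shows "UU x < UU z"
proof (rule DERIV_pos_imp_increasing_open[OF \<open>x < z\<close>])
  show "\<exists>d. (UU has_real_derivative d) (at w) \<and> 0 < d" if "x < w" "w < z" for w
    using that assms U_deriv dU_pos by (intro exI[of _ "dU w"]) auto
  show "continuous_on {x..z} UU"
    using assms by (intro continuous_at_imp_continuous_on ballI isCont_U) auto
qed

lemma U_greater:
  assumes "ph1 \<le> x" "x < z" "z \<le> ph2"
  shows "UU z < UU x"
proof (rule DERIV_neg_imp_decreasing_open[OF \<open>x < z\<close>])
  show "\<exists>d. (UU has_real_derivative d) (at w) \<and> d < 0" if "x < w" "w < z" for w
    using that assms U_deriv dU_neg ph2_less_C1 by (intro exI[of _ "dU w"]) auto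
  show "continuous_on {x..z} UU"
    using assms ph2_less_C1 by (intro continuous_at_imp_continuous_on ballI isCont_U) auto
qed

lemma bminus_less_bplus: "bm < bp"
  using U_greater[of ph1 ph2] ph1_less_ph2 by (simp add: bminus_def bplus_def)

lemma U_unbounded: "\<exists>\<phi>. ph2 < \<phi> \<and> \<phi> < C1 \<and> b < UU \<phi>"
proof -
  obtain y where y: "0 < y" "y < p" "b - bm < a^2 * (y - p)^2 * (2 - y - 2*p) / (2*y)"
    using exists_quotient_gt[of p "a^2" "b - bm"] p_props a_pos by auto
  define \<phi> where "\<phi> = C1 - a * y"
  have "y_of \<phi> = y" by (simp add: \<phi>_def y_of_inverse)
  moreover have "\<phi> < C1" "ph2 < \<phi>"
    using y a_pos y_of_less_iff[of \<phi> ph2] by (simp_all add: \<phi>_def p_def y_of_inverse)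
  ultimately show ?thesis
    using y U_minus_bminus[of \<phi>] by (intro exI[of _ \<phi>]) (auto simp: bminus_def)
qed

lemma ph_plus:
  assumes "bm < b"
  shows "ph2 < ph_plus b" "ph_plus b < C1" "UU (ph_plus b) = b"
proof -
  have "\<exists>!\<phi>. UU \<phi> = b \<and> ph2 < \<phi> \<and> \<phi> < C1"
  proof (rule ex_ex1I)
    obtain z where z: "ph2 < z" "z < C1" "b < UU z" using U_unbounded by blast
    then obtain x where "ph2 \<le> x" "x \<le> z" "UU x = b"
      using IVT[of UU ph2 b z] assms isCont_U by (fastforce simp: bminus_def)
    moreover have "x \<noteq> ph2" using \<open>UU x = b\<close> assms by (auto simp: bminus_def)
    ultimately show "\<exists>\<phi>. UU \<phi> = b \<and> ph2 < \<phi> \<and> \<phi> < C1" using z by force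
    show "x = z" if "UU x = b \<and> ph2 < x \<and> x < C1" "UU z = b \<and> ph2 < z \<and> z < C1" for x z
      using that U_less[of x z] U_less[of z x] by (cases x z rule: linorder_cases) auto
  qed
  from theI'[OF this] show "ph2 < ph_plus b" "ph_plus b < C1" "UU (ph_plus b) = b"
    unfolding phiplus_def by auto
qed

lemma ph_minus:
  assumes "bm < b" "b < bp"
  shows "ph1 < ph_minus b" "ph_minus b < ph2" "UU (ph_minus b) = b"
proof -
  have "\<exists>!\<phi>. UU \<phi> = b \<and> ph1 < \<phi> \<and> \<phi> < ph2"
  proof (rule ex_ex1I)
    obtain x where "ph1 \<le> x" "x \<le> ph2" "UU x = b"
      using IVT2[of UU ph2 b ph1] assms ph1_less_ph2 ph2_less_C1 isCont_U
      by (fastforce simp: bminus_def bplus_def)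
    moreover have "x \<noteq> ph1" "x \<noteq> ph2" using \<open>UU x = b\<close> assms by (auto simp: bminus_def bplus_def)
    ultimately show "\<exists>\<phi>. UU \<phi> = b \<and> ph1 < \<phi> \<and> \<phi> < ph2" by force
    show "x = z" if "UU x = b \<and> ph1 < x \<and> x < ph2" "UU z = b \<and> ph1 < z \<and> z < ph2" for x z
      using that U_greater[of x z] U_greater[of z x] by (cases x z rule: linorder_cases) auto
  qed
  from theI'[OF this] show "ph1 < ph_minus b" "ph_minus b < ph2" "UU (ph_minus b) = b"
    unfolding phiminus_def by auto
qed

sublocale plus: increasing_branch UU dU ph_plus ph2 "ph_plus bp"
proof
  have b: "bm < bp" by (rule bminus_less_bplus)
  show "ph2 < ph_plus bp" using ph_plus[OF b] by simp
  show "isCont UU x" if "ph2 \<le> x" "x \<le> ph_plus bp" for x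
    using ph_plus[OF b] that isCont_U by auto
  show "(UU has_real_derivative dU x) (at x)" if "ph2 < x" "x < ph_plus bp" for x
    using ph_plus[OF b] that U_deriv by auto
  show "0 < dU x" if "ph2 < x" "x < ph_plus bp" for x
    using ph_plus[OF b] that dU_pos by auto
  show "isCont dU x" if "ph2 < x" "x < ph_plus bp" for x
    using ph_plus[OF b] that isCont_dU by auto
  show "ph2 < ph_plus s \<and> ph_plus s < ph_plus bp \<and> UU (ph_plus s) = s"
    if "UU ph2 < s" "s < UU (ph_plus bp)" for s
  proof -
    have "bm < s" "s < bp" using that ph_plus[OF b] by (simp_all add: bminus_def)
    note s = ph_plus[OF \<open>bm < s\<close>] and r = ph_plus[OF b]
    have "ph_plus s < ph_plus bp"
    proof (rule ccontr)
      assume "\<not> ph_plus s < ph_plus bp"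
      then have "UU (ph_plus bp) \<le> UU (ph_plus s)"
        using U_less[of "ph_plus bp" "ph_plus s"] s r by (cases "ph_plus bp = ph_plus s") auto
      then show False using s r \<open>s < bp\<close> by simp
    qed
    then show ?thesis using s by simp
  qed
qed

lemma U_reflected_deriv:
  assumes "- x \<noteq> C1"
  shows "((\<lambda>x. UU (- x)) has_real_derivative - dU (- x)) (at x)"
  using DERIV_chain2[OF U_deriv[OF assms] DERIV_minus[OF DERIV_ident]] by simp

text \<open>The decreasing branch becomes increasing after the reflection \<open>\<phi> \<mapsto> -\<phi>\<close>.\<close>
sublocale minus: increasing_branch "\<lambda>x. UU (- x)" "\<lambda>x. - dU (- x)" "\<lambda>s. - ph_minus s" "- ph2" "- ph1"
proof
  show "- ph2 < - ph1" using ph1_less_ph2 by simp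
  show "isCont (\<lambda>x. UU (- x)) x" if "- ph2 \<le> x" "x \<le> - ph1" for x
    using that ph2_less_C1 U_reflected_deriv[of x] DERIV_isCont by force
  show "((\<lambda>x. UU (- x)) has_real_derivative - dU (- x)) (at x)" if "- ph2 < x" "x < - ph1" for x
    using that ph2_less_C1 U_reflected_deriv[of x] by force
  show "0 < - dU (- x)" if "- ph2 < x" "x < - ph1" for x
    using that dU_neg[of "- x"] by simp
  show "isCont (\<lambda>x. - dU (- x)) x" if "- ph2 < x" "x < - ph1" for x
    using that ph2_less_C1 isCont_dU[of "- x"]
    by (intro continuous_intros isCont_o2[where f=uminus and g=dU]) auto
  show "- ph2 < - ph_minus s \<and> - ph_minus s < - ph1 \<and> UU (- (- ph_minus s)) = s"
    if "UU (- (- ph2)) < s" "s < UU (- (- ph1))" for s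
    using that ph_minus[of s] by (simp add: bminus_def bplus_def)
qed

lemma ph_minus_deriv:
  assumes "bm < s" "s < bp"
  shows "(ph_minus has_real_derivative inverse (dU (ph_minus s))) (at s)"
proof -
  have "((\<lambda>s. - ph_minus s) has_real_derivative inverse (- dU (ph_minus s))) (at s)"
    using minus.inverse_deriv[of s] assms by (simp add: bminus_def bplus_def)
  from DERIV_minus[OF this] show ?thesis by simp
qed

lemma ph_plus_deriv:
  assumes "bm < s" "s < bp"
  shows "(ph_plus has_real_derivative inverse (dU (ph_plus s))) (at s)"
  using plus.inverse_deriv[of s] assms ph_plus[OF bminus_less_bplus] by (simp add: bminus_def)

lemma quad_p_pos: "0 \<le> y \<Longrightarrow> y < q \<Longrightarrow> 0 < quad p y"
  using quad_pos[OF p_props(1) _ quad_p_q] p_props q_props by simp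

lemma nu_pos:
  assumes "0 < y" "y < q"
  shows "0 < nu p y"
proof -
  have "0 < 2 - 2*p - y" using assms q_less by simp
  then show ?thesis using assms quad_p_pos[of y] by (simp add: nu_def)
qed

text \<open>\<open>G \<phi> = \<surd>(2 (U \<phi> - b\<^sub>-)) / |U' \<phi>|\<close> (lemma \<open>G_dU_sq\<close>), written so that it is smooth
  across the minimum \<open>\<phi>\<^sub>2\<close>.\<close>
definition G :: "real \<Rightarrow> real" where
  "G \<phi> = sqrt (2 * nu p (y_of \<phi>))"

lemma G_pos: "ph1 < \<phi> \<Longrightarrow> \<phi> < C1 \<Longrightarrow> 0 < G \<phi>"
  using nu_pos y_of_bounds by (simp add: G_def)

lemma G_dU_sq:
  assumes "ph1 < \<phi>" "\<phi> < C1"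
  shows "(G \<phi> * dU \<phi>)^2 = 2 * (UU \<phi> - bm)"
proof -
  define y where "y = y_of \<phi>"
  have y: "0 < y" "y < q" using y_of_bounds[OF assms] by (simp_all add: y_def)
  then have Q: "0 < quad p y" using quad_p_pos by simp
  have "(G \<phi>)^2 = 2 * nu p y" using nu_pos[OF y] by (simp add: G_def y_def)
  also have "\<dots> = y^3 * (2 - 2*p - y) / (quad p y)^2" by (simp add: nu_def)
  finally have G2: "(G \<phi>)^2 = y^3 * (2 - 2*p - y) / (quad p y)^2" .
  have dU2: "(dU \<phi>)^2 = (a * (y - p) * quad p y / y^2)^2"
    using dU_eq[OF assms(2)] by (simp add: y_def power2_eq_square)
  have "(G \<phi> * dU \<phi>)^2 = y^3 * (2 - 2*p - y) / (quad p y)^2 * (a * (y - p) * quad p y / y^2)^2"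
    by (simp only: power_mult_distrib G2 dU2)
  also have "\<dots> = 2 * (a^2 * (y - p)^2 * (2 - y - 2*p) / (2 * y))"
    using y Q by (simp add: field_simps power2_eq_square power3_eq_cube)
  also have "\<dots> = 2 * (UU \<phi> - bm)"
    using U_minus_bminus[OF assms(2)] by (simp add: y_def bminus_def)
  finally show ?thesis .
qed

lemma G_dU_eq_plus:
  assumes "ph2 < \<phi>" "\<phi> < C1"
  shows "G \<phi> * dU \<phi> = sqrt (2 * (UU \<phi> - bm))"
proof -
  have "0 < G \<phi> * dU \<phi>" using G_pos dU_pos assms ph1_less_ph2 by simp
  then show ?thesis
    using G_dU_sq[of \<phi>] assms ph1_less_ph2 by (metis abs_of_pos less_trans real_sqrt_abs)
qed

lemma G_dU_eq_minus:
  assumes "ph1 < \<phi>" "\<phi> < ph2"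
  shows "G \<phi> * (- dU \<phi>) = sqrt (2 * (UU \<phi> - bm))"
proof -
  have "0 < G \<phi> * (- dU \<phi>)"
    using G_pos[of \<phi>] dU_neg assms ph2_less_C1 by (intro mult_pos_pos) auto
  then show ?thesis
    using G_dU_sq[of \<phi>] assms ph2_less_C1
    by (metis abs_of_pos less_trans power2_minus mult_minus_right real_sqrt_abs)
qed

lemma G_deriv:
  assumes "ph1 < \<phi>" "\<phi> < C1"
  shows "(G has_real_derivative - nu' p (y_of \<phi>) / (a * G \<phi>)) (at \<phi>)"
proof -
  have y: "0 < y_of \<phi>" "y_of \<phi> < q" using y_of_bounds[OF assms] by auto
  have "quad p (y_of \<phi>) \<noteq> 0" using quad_p_pos[of "y_of \<phi>"] y by simp
  then have "((\<lambda>\<phi>. 2 * nu p (y_of \<phi>)) has_real_derivative 2 * (nu' p (y_of \<phi>) * (- 1 / a))) (at \<phi>)"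
    using a_pos
    by (intro DERIV_cmult DERIV_chain2[OF nu_deriv]) (auto intro!: derivative_eq_intros simp: y_of_def[abs_def])
  from DERIV_chain2[OF DERIV_real_sqrt this]
  have "(G has_real_derivative inverse (G \<phi>) / 2 * (2 * (nu' p (y_of \<phi>) * (- 1 / a)))) (at \<phi>)"
    using nu_pos[OF y] unfolding G_def[abs_def] by simp
  moreover have "inverse (G \<phi>) / 2 * (2 * (nu' p (y_of \<phi>) * (- 1 / a))) = - nu' p (y_of \<phi>) / (a * G \<phi>)"
    using a_pos by (simp add: field_simps)
  ultimately show ?thesis by simp
qed

lemma isCont_G: "ph1 < \<phi> \<Longrightarrow> \<phi> < C1 \<Longrightarrow> isCont G \<phi>"
  using G_deriv DERIV_isCont by blast

definition Gsum :: "real \<Rightarrow> real" where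
  "Gsum s = G (ph_minus s) + G (ph_plus s)"

lemma Gsum_deriv:
  assumes "bm < s" "s < bp"
  shows "(Gsum has_real_derivative
      (nu' p (y_of (ph_minus s)) - nu' p (y_of (ph_plus s))) / (a * sqrt (2 * (s - bm)))) (at s)"
proof -
  note M = ph_minus[OF assms] and P = ph_plus[OF assms(1)]
  define S where "S = sqrt (2 * (s - bm))"
  have "0 < S" using assms by (simp add: S_def)
  have GM: "G (ph_minus s) * (- dU (ph_minus s)) = S"
    using G_dU_eq_minus[of "ph_minus s"] M by (simp add: S_def)
  have GP: "G (ph_plus s) * dU (ph_plus s) = S"
    using G_dU_eq_plus[of "ph_plus s"] P by (simp add: S_def)
  have "((\<lambda>s. G (ph_minus s)) has_real_derivative
      - nu' p (y_of (ph_minus s)) / (a * G (ph_minus s)) * inverse (dU (ph_minus s))) (at s)"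
    using M ph2_less_C1 by (intro DERIV_chain2[OF G_deriv ph_minus_deriv[OF assms]]) auto
  moreover have "((\<lambda>s. G (ph_plus s)) has_real_derivative
      - nu' p (y_of (ph_plus s)) / (a * G (ph_plus s)) * inverse (dU (ph_plus s))) (at s)"
    using P ph1_less_ph2 by (intro DERIV_chain2[OF G_deriv ph_plus_deriv[OF assms]]) auto
  ultimately have "(Gsum has_real_derivative
      - nu' p (y_of (ph_minus s)) / (a * G (ph_minus s)) * inverse (dU (ph_minus s))
      + - nu' p (y_of (ph_plus s)) / (a * G (ph_plus s)) * inverse (dU (ph_plus s))) (at s)"
    unfolding Gsum_def[abs_def] by (rule DERIV_add)
  moreover have "- nu' p (y_of (ph_minus s)) / (a * G (ph_minus s)) * inverse (dU (ph_minus s))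
      = nu' p (y_of (ph_minus s)) / (a * S)"
    unfolding GM[symmetric] by (simp add: field_simps)
  moreover have "- nu' p (y_of (ph_plus s)) / (a * G (ph_plus s)) * inverse (dU (ph_plus s))
      = - nu' p (y_of (ph_plus s)) / (a * S)"
    unfolding GP[symmetric] by (simp add: field_simps)
  ultimately show ?thesis by (simp add: S_def diff_divide_distrib)
qed

lemma Gsum_strict_mono:
  assumes "bm < s" "s < t" "t < bp"
  shows "Gsum s < Gsum t"
proof (rule DERIV_pos_imp_increasing[OF \<open>s < t\<close>])
  fix x assume "s \<le> x" "x \<le> t"
  then have x: "bm < x" "x < bp" using assms by auto
  note M = ph_minus[OF x] and P = ph_plus[OF x(1)]
  have "y_of (ph_plus x) < y_of (ph_minus x)"
    using M P y_of_less_iff by simp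
  moreover have "0 < y_of (ph_plus x)" "y_of (ph_minus x) < q"
    using y_of_bounds M P ph1_less_ph2 ph2_less_C1 by auto
  ultimately have "nu' p (y_of (ph_plus x)) < nu' p (y_of (ph_minus x))"
    using nu'_strict_mono[OF p_props(1) _ quad_p_q] p_props q_props by simp
  then have "0 < (nu' p (y_of (ph_minus x)) - nu' p (y_of (ph_plus x))) / (a * sqrt (2 * (x - bm)))"
    using x a_pos by simp
  then show "\<exists>d. (Gsum has_real_derivative d) (at x) \<and> 0 < d"
    using Gsum_deriv[OF x] by blast
qed

lemma G_le_Gsum:
  assumes "bm < s" "s \<le> b" "b < bp"
  shows "G (ph_minus s) \<le> Gsum b" "G (ph_plus s) \<le> Gsum b"
proof -
  have "Gsum s \<le> Gsum b" using Gsum_strict_mono[of s b] assms by (cases "s = b") auto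
  moreover have "0 < G (ph_minus s)" "0 < G (ph_plus s)"
    using G_pos ph_minus[of s] ph_plus[of s] assms ph1_less_ph2 ph2_less_C1 by auto
  ultimately show "G (ph_minus s) \<le> Gsum b" "G (ph_plus s) \<le> Gsum b"
    by (simp_all add: Gsum_def)
qed

lemma minus_branch_integral:
  assumes b: "bm < b" "b < bp"
  defines "f \<equiv> \<lambda>\<phi>. 1 / sqrt (2 * (b - UU \<phi>))"
  shows "(\<lambda>\<theta>. G (ph_minus (sin_sq_path bm b \<theta>))) integrable_on {0..pi/2}"
    and "(f has_integral integral {0..pi/2} (\<lambda>\<theta>. G (ph_minus (sin_sq_path bm b \<theta>)))) {ph_minus b..ph2}"
proof -
  have bounds: "UU ph2 < b" "b < UU ph1" using b by (simp_all add: bminus_eq bplus_eq)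
  have hyps: "isCont (\<lambda>x. G (- x)) (- ph_minus s)"
    "G (ph_minus s) * - dU (ph_minus s) = sqrt (2 * (s - UU ph2))"
    "G (ph_minus s) \<le> Gsum b" if "UU ph2 < s" "s \<le> b" for s
  proof -
    have "bm < s" "s < bp" using that b by (simp_all add: bminus_eq)
    note Ms = ph_minus[OF this]
    show "isCont (\<lambda>x. G (- x)) (- ph_minus s)"
      using Ms ph2_less_C1 by (intro isCont_o2[where f=uminus and g=G] continuous_intros isCont_G) auto
    show "G (ph_minus s) * - dU (ph_minus s) = sqrt (2 * (s - UU ph2))"
      using G_dU_eq_minus Ms by (simp add: bminus_eq)
    show "G (ph_minus s) \<le> Gsum b" using G_le_Gsum \<open>bm < s\<close> that b by simp
  qed
  have subst: "(\<lambda>\<theta>. G (ph_minus (sin_sq_path bm b \<theta>))) integrable_on {0..pi/2}"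
    "((\<lambda>\<phi>. f (- \<phi>)) has_integral integral {0..pi/2} (\<lambda>\<theta>. G (ph_minus (sin_sq_path bm b \<theta>))))
      {- ph2..- ph_minus b}"
    using minus.inverse_integral_substitution[of b "\<lambda>x. G (- x)" "Gsum b",
        unfolded minus_minus minus.orbit_def] bounds hyps
    by (simp_all add: f_def bminus_eq)
  then show "(\<lambda>\<theta>. G (ph_minus (sin_sq_path bm b \<theta>))) integrable_on {0..pi/2}"
    and "(f has_integral integral {0..pi/2} (\<lambda>\<theta>. G (ph_minus (sin_sq_path bm b \<theta>)))) {ph_minus b..ph2}"
    by simp_all
qed

lemma plus_branch_integral:
  assumes b: "bm < b" "b < bp"
  shows "(\<lambda>\<theta>. G (ph_plus (sin_sq_path bm b \<theta>))) integrable_on {0..pi/2}"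
    and "((\<lambda>\<phi>. 1 / sqrt (2 * (b - UU \<phi>))) has_integral
      integral {0..pi/2} (\<lambda>\<theta>. G (ph_plus (sin_sq_path bm b \<theta>)))) {ph2..ph_plus b}"
proof -
  have bounds: "UU ph2 < b" "b < UU (ph_plus bp)"
    using b ph_plus[OF bminus_less_bplus] by (simp_all add: bminus_eq)
  have hyps: "isCont G (ph_plus s)"
    "G (ph_plus s) * dU (ph_plus s) = sqrt (2 * (s - UU ph2))"
    "G (ph_plus s) \<le> Gsum b" if "UU ph2 < s" "s \<le> b" for s
  proof -
    have "bm < s" using that by (simp add: bminus_eq)
    note Ps = ph_plus[OF this]
    show "isCont G (ph_plus s)" using Ps ph1_less_ph2 by (intro isCont_G) auto
    show "G (ph_plus s) * dU (ph_plus s) = sqrt (2 * (s - UU ph2))"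
      using G_dU_eq_plus Ps by (simp add: bminus_eq)
    show "G (ph_plus s) \<le> Gsum b" using G_le_Gsum \<open>bm < s\<close> that b by simp
  qed
  show "(\<lambda>\<theta>. G (ph_plus (sin_sq_path bm b \<theta>))) integrable_on {0..pi/2}"
    and "((\<lambda>\<phi>. 1 / sqrt (2 * (b - UU \<phi>))) has_integral
      integral {0..pi/2} (\<lambda>\<theta>. G (ph_plus (sin_sq_path bm b \<theta>)))) {ph2..ph_plus b}"
    using plus.inverse_integral_substitution[of b G "Gsum b", unfolded plus.orbit_def] bounds hyps
    by (simp_all add: bminus_eq)
qed

lemma periodL_has_integral:
  assumes b: "bm < b" "b < bp"
  shows "((\<lambda>\<theta>. Gsum (sin_sq_path bm b \<theta>)) has_integral periodL C1 C2 C3 b / 2) {0..pi/2}"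
proof -
  note minus = minus_branch_integral[OF b] and plus = plus_branch_integral[OF b]
  have "((\<lambda>\<phi>. 1 / sqrt (2 * (b - UU \<phi>))) has_integral
      integral {0..pi/2} (\<lambda>\<theta>. G (ph_minus (sin_sq_path bm b \<theta>)))
      + integral {0..pi/2} (\<lambda>\<theta>. G (ph_plus (sin_sq_path bm b \<theta>)))) {ph_minus b..ph_plus b}"
    using ph_minus[OF b] ph_plus[OF b(1)] minus(2) plus(2) by (intro has_integral_combine[of _ ph2]) auto
  also have "integral {0..pi/2} (\<lambda>\<theta>. G (ph_minus (sin_sq_path bm b \<theta>)))
      + integral {0..pi/2} (\<lambda>\<theta>. G (ph_plus (sin_sq_path bm b \<theta>)))
      = integral {0..pi/2} (\<lambda>\<theta>. Gsum (sin_sq_path bm b \<theta>))"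
    unfolding Gsum_def using minus(1) plus(1) by (rule integral_add[symmetric])
  finally have "periodL C1 C2 C3 b / 2 = integral {0..pi/2} (\<lambda>\<theta>. Gsum (sin_sq_path bm b \<theta>))"
    unfolding periodL_def by (simp add: integral_unique)
  moreover have "(\<lambda>\<theta>. Gsum (sin_sq_path bm b \<theta>)) integrable_on {0..pi/2}"
    unfolding Gsum_def using minus(1) plus(1) by (rule integrable_add)
  ultimately show ?thesis by (simp add: has_integral_integral)
qed

lemma isCont_Gsum: "bm < s \<Longrightarrow> s < bp \<Longrightarrow> isCont Gsum s"
  using Gsum_deriv DERIV_isCont by blast

lemma periodL_strict_mono:
  assumes "bm < b1" "b1 < b2" "b2 < bp"
  shows "periodL C1 C2 C3 b1 < periodL C1 C2 C3 b2"
proof -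
  define h1 where "h1 \<theta> = Gsum (sin_sq_path bm b1 \<theta>)" for \<theta>
  define h2 where "h2 \<theta> = Gsum (sin_sq_path bm b2 \<theta>)" for \<theta>
  have int: "(h1 has_integral periodL C1 C2 C3 b1 / 2) {0..pi/2}"
    "(h2 has_integral periodL C1 C2 C3 b2 / 2) {0..pi/2}"
    unfolding h1_def h2_def using assms by (auto intro!: periodL_has_integral)
  have path: "bm < sin_sq_path bm b \<theta>" "sin_sq_path bm b \<theta> < bp"
    if "b \<in> {b1, b2}" "0 < \<theta>" "\<theta> \<le> pi/2" for b \<theta>
    using that assms sin_sq_path_bounds[of bm b \<theta>] by auto
  have less: "h1 \<theta> < h2 \<theta>" if "0 < \<theta>" "\<theta> \<le> pi/2" for \<theta>
  proof -
    have "0 < sin \<theta>" using that by (intro sin_gt_zero) auto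
    then show ?thesis
      unfolding h1_def h2_def using that assms path sin_sq_path_strict_mono[of \<theta> b1 b2 bm]
      by (intro Gsum_strict_mono) auto
  qed
  have le: "h1 \<theta> \<le> h2 \<theta>" if "0 \<le> \<theta>" "\<theta> \<le> pi/2" for \<theta>
    using less[of \<theta>] that by (cases "\<theta> = 0") (auto simp: h1_def h2_def sin_sq_path_def)
  have cont: "continuous_on {pi/4..pi/2} (\<lambda>\<theta>. Gsum (sin_sq_path bm b \<theta>))" if "b \<in> {b1, b2}" for b
  proof (intro continuous_at_imp_continuous_on ballI isCont_o2[OF isCont_sin_sq_path] isCont_Gsum)
    fix \<theta> :: real assume "\<theta> \<in> {pi/4..pi/2}"
    then have "0 < \<theta>" "\<theta> \<le> pi/2" using pi_gt_zero by (auto simp del: pi_gt_zero)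
    then show "bm < sin_sq_path bm b \<theta>" "sin_sq_path bm b \<theta> < bp" using path[OF that] by auto
  qed
  have "integral {0..pi/2} h1 < integral {0..pi/2} h2"
    using int le cont less pi_gt_zero unfolding h1_def h2_def
    by (intro integral_strict_mono_on_tail[where c="pi/4"]) (auto simp del: pi_gt_zero)
  then show ?thesis using int by (simp add: integral_unique)
qed

end

theorem lemma3:
  fixes C1 C2 C3 :: real
  assumes "0 < C1" and "C1 \<le> C2"
    and "0 < C3" and "C3 < C3crit C1 C2"
  shows "strict_mono_on {bminus C1 C2 C3 <..< bplus C1 C2 C3} (periodL C1 C2 C3)"
proof -
  interpret dgh_wave C1 C2 C3
    using assms by unfold_locales auto
  show ?thesis
    by (rule strict_mono_onI) (auto intro: periodL_strict_mono)
qed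

end
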